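(* Let $\Psi=\langle\mathcal{S},\mathcal{P},\mathcal{T}\rangle$ be an SPL with internally consistent (e.g. canonical) traceability relation, let $f\in\mathcal{F}$ and $c_k\in\mathcal{C}$. Then $c_k$ is critical for $f$ if and only if the quantified Boolean formula $\forall c'_1\cdots c'_n\,\{[\,C_I(c'_1,\dots,c'_n)\wedge f\_implements(c'_1,\dots,c'_n,f)\,]\Rightarrow c'_k\}$ is true.
   Context: $\mathcal{C}=\{c_1,\dots,c_n\}$ components, $\mathcal{F}$ features, platform $\mathcal{P}\subseteq\mathcal{P}ow(\mathcal{C})$, $\mathcal{T}=\langle prov,req\rangle$ with $prov,req:\mathcal{F}\to\mathcal{P}ow(\mathcal{P}ow(\mathcal{C}))$. $implements(C,f)$ iff $\exists C_1\in prov(f),C_2\in req(f)$ with $C_2\subseteq C_1\subseteq C$. A component $c$ is critical for $f$ if for all $C\in\mathcal{P}$, $c\notin C$ implies $\neg implements(C,f)$. Internally consistent: for every $f$ and $C\in prov(f)$ there is $C'\in req(f)$ with $C'\subseteq C$. With Boolean variables $c_1,\dots,c_n$: $formula\_prov(f)=\bigvee_{S\in prov(f)}\bigwedge_{c_i\in S}c_i$ (FALSE if $prov(f)=\emptyset$); $f\_implements(c'_1,\dots,c'_n,f)=\forall c_1\cdots c_n\{[\bigwedge_i(c'_i\Rightarrow c_i)]\Rightarrow formula\_prov(f)\}$ (inner bound variables distinct from $c'_i$). $C_I(c'_1,\dots,c'_n)=\bigvee_{A\in\mathcal{P}}\bigwedge_{i=1}^n\ell^A_i$ with $\ell^A_i=c'_i$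 if $c_i\in A$ and $\neg c'_i$ otherwise, so $C_I(c')$ holds iff $c'$ is the characteristic vector of some $A\in\mathcal{P}$. *)

theory Defs
  imports Main
begin

(* An SPL over a finite component set Comp = {c_1,...,c_n}; features of type 'f.
   Platform P : set of products (subsets of Comp).
   Traceability T = <prov, req>, prov, req : 'f => 'c set set. *)

definition implements :: "('f \<Rightarrow> 'c set set) \<Rightarrow> ('f \<Rightarrow> 'c set set) \<Rightarrow> 'c set \<Rightarrow> 'f \<Rightarrow> bool" where
  "implements prov req C f \<longleftrightarrow> (\<exists>C1\<in>prov f. \<exists>C2\<in>req f. C2 \<subseteq> C1 \<and> C1 \<subseteq> C)"

definition critical :: "'c set set \<Rightarrow> ('f \<Rightarrow> 'c set set) \<Rightarrow> ('f \<Rightarrow> 'c set set) \<Rightarrow> 'c \<Rightarrow> 'f \<Rightarrow> bool" where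
  "critical P prov req c f \<longleftrightarrow> (\<forall>C\<in>P. c \<notin> C \<longrightarrow> \<not> implements prov req C f)"

definition internally_consistent :: "('f \<Rightarrow> 'c set set) \<Rightarrow> ('f \<Rightarrow> 'c set set) \<Rightarrow> bool" where
  "internally_consistent prov req \<longleftrightarrow> (\<forall>f. \<forall>C\<in>prov f. \<exists>C'\<in>req f. C' \<subseteq> C)"

(* Boolean encodings: an assignment to the variables c_1..c_n is a function
   v :: 'c => bool (only its values on Comp matter). *)

definition formula_prov :: "('f \<Rightarrow> 'c set set) \<Rightarrow> 'f \<Rightarrow> ('c \<Rightarrow> bool) \<Rightarrow> bool" where
  "formula_prov prov f v \<longleftrightarrow> (\<exists>S\<in>prov f. \<forall>c\<in>S. v c)"

definition f_implements :: "'c set \<Rightarrow> ('f \<Rightarrow> 'c set set) \<Rightarrow> ('c \<Rightarrow> bool) \<Rightarrow> 'f \<Rightarrow> bool" where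
  "f_implements Comp prov v' f \<longleftrightarrow>
     (\<forall>v::'c \<Rightarrow> bool. (\<forall>c\<in>Comp. v' c \<longrightarrow> v c) \<longrightarrow> formula_prov prov f v)"

definition C_I :: "'c set \<Rightarrow> 'c set set \<Rightarrow> ('c \<Rightarrow> bool) \<Rightarrow> bool" where
  "C_I Comp P v' \<longleftrightarrow> (\<exists>A\<in>P. \<forall>c\<in>Comp. (v' c \<longleftrightarrow> c \<in> A))"

end

theory Submission
  imports Defs
begin

(* Both sides of the equivalence reduce to the same condition on
   products: "every product A \<in> P that contains some provider set S \<in> prov f
   also contains c_k".
   - On the SPL side, internal consistency makes the requirement part of
     implements redundant: A implements f iff A contains a provider set.
   - On the QBF side, C_I ranges exactly over characteristic vectors of
     products, and f_implements, evaluated at the characteristic vector of A,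
     says exactly that A contains a provider set (the universally quantified
     assignment can be taken to be that characteristic vector itself). *)

definition provides :: "('f \<Rightarrow> 'c set set) \<Rightarrow> 'c set \<Rightarrow> 'f \<Rightarrow> bool" where
  "provides prov A f \<longleftrightarrow> (\<exists>S\<in>prov f. S \<subseteq> A)"

text \<open>Under internal consistency, implementing a feature is the same as providing it:
  every provider set already contains a required set.\<close>

lemma implements_iff_provides:
  assumes "internally_consistent prov req"
  shows "implements prov req A f \<longleftrightarrow> provides prov A f"
proof
  assume "implements prov req A f"
  then show "provides prov A f" unfolding implements_def provides_def by blast
next
  assume "provides prov A f"
  then obtain S where S: "S \<in> prov f" "S \<subseteq> A" unfolding provides_def by blast
  moreover obtain R where "R \<in> req f" "R \<subseteq> S"
    using assms S(1) unfolding internally_consistent_def by blast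
  ultimately show "implements prov req A f" unfolding implements_def by blast
qed

text \<open>At an assignment agreeing on Comp with the characteristic function of A,
  the Boolean encoding f_implements expresses that A provides f.  The forward
  direction instantiates the universal assignment with that characteristic
  function itself; the backward direction uses that provider sets
  lie inside Comp.\<close>

lemma f_implements_iff_provides:
  assumes prov_Comp: "\<And>g. prov g \<subseteq> Pow Comp"
    and agree: "\<forall>c\<in>Comp. v' c \<longleftrightarrow> c \<in> A"
  shows "f_implements Comp prov v' f \<longleftrightarrow> provides prov A f"
proof
  assume "f_implements Comp prov v' f"
  then have "(\<forall>c\<in>Comp. v' c \<longrightarrow> c \<in> A) \<longrightarrow> formula_prov prov f (\<lambda>c. c \<in> A)"
    unfolding f_implements_def by (rule spec)
  then have "formula_prov prov f (\<lambda>c. c \<in> A)" using agree by blast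
  then show "provides prov A f"
    unfolding formula_prov_def provides_def by blast
next
  assume "provides prov A f"
  then obtain S where S: "S \<in> prov f" "S \<subseteq> A"
    unfolding provides_def by blast
  then have "S \<subseteq> Comp" using prov_Comp by blast
  show "f_implements Comp prov v' f"
    unfolding f_implements_def
  proof (intro allI impI)
    fix v assume "\<forall>c\<in>Comp. v' c \<longrightarrow> v c"
    then have "\<forall>c\<in>S. v c" using S(2) \<open>S \<subseteq> Comp\<close> agree by blast
    then show "formula_prov prov f v" using S(1) unfolding formula_prov_def by blast
  qed
qed

lemma critical_iff_provides:
  assumes "internally_consistent prov req"
  shows "critical P prov req c f \<longleftrightarrow> (\<forall>A\<in>P. provides prov A f \<longrightarrow> c \<in> A)"
  using implements_iff_provides[OF assms] unfolding critical_def by blast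

text \<open>The quantified Boolean formula, restated in the same terms: the assignments
  satisfying C_I are exactly the characteristic vectors of products.\<close>

lemma QBF_iff_provides:
  assumes prov_Comp: "\<And>g. prov g \<subseteq> Pow Comp"
    and c_Comp: "c \<in> Comp"
  shows "(\<forall>v'. (C_I Comp P v' \<and> f_implements Comp prov v' f) \<longrightarrow> v' c)
         \<longleftrightarrow> (\<forall>A\<in>P. provides prov A f \<longrightarrow> c \<in> A)"
proof
  assume qbf: "\<forall>v'. (C_I Comp P v' \<and> f_implements Comp prov v' f) \<longrightarrow> v' c"
  show "\<forall>A\<in>P. provides prov A f \<longrightarrow> c \<in> A"
  proof (intro ballI impI)
    fix A assume A: "A \<in> P" "provides prov A f"
    have agree: "\<forall>x\<in>Comp. x \<in> A \<longleftrightarrow> x \<in> A" by blast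
    have "C_I Comp P (\<lambda>x. x \<in> A)" unfolding C_I_def using A(1) agree by blast
    moreover have "f_implements Comp prov (\<lambda>x. x \<in> A) f"
      using f_implements_iff_provides[where prov = prov, OF prov_Comp agree] A(2) by blast
    ultimately have "(\<lambda>x. x \<in> A) c" using qbf by blast
    then show "c \<in> A" by simp
  qed
next
  assume prod: "\<forall>A\<in>P. provides prov A f \<longrightarrow> c \<in> A"
  show "\<forall>v'. (C_I Comp P v' \<and> f_implements Comp prov v' f) \<longrightarrow> v' c"
  proof (intro allI impI)
    fix v' assume "C_I Comp P v' \<and> f_implements Comp prov v' f"
    then obtain A where A: "A \<in> P" "\<forall>x\<in>Comp. v' x \<longleftrightarrow> x \<in> A"
      and "f_implements Comp prov v' f"
      unfolding C_I_def by blast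
    then have "provides prov A f"
      using f_implements_iff_provides[where prov = prov, OF prov_Comp A(2)] by blast
    then show "v' c" using prod A c_Comp by blast
  qed
qed

text \<open>The main theorem: both sides are equivalent to the product condition above.\<close>

theorem mainTheorem9:
  fixes Comp :: "'c set" and P :: "'c set set"
    and prov req :: "'f \<Rightarrow> 'c set set" and f :: 'f and ck :: 'c
  assumes "finite Comp"
    and "P \<subseteq> Pow Comp"
    and "\<And>g. prov g \<subseteq> Pow Comp"
    and "\<And>g. req g \<subseteq> Pow Comp"
    and "internally_consistent prov req"
    and "ck \<in> Comp"
  shows "critical P prov req ck f \<longleftrightarrow>
         (\<forall>v'::'c \<Rightarrow> bool. (C_I Comp P v' \<and> f_implements Comp prov v' f) \<longrightarrow> v' ck)"
proof -
  have "critical P prov req ck f \<longleftrightarrow> (\<forall>A\<in>P. provides prov A f \<longrightarrow> ck \<in> A)"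
    using assms(5) by (rule critical_iff_provides)
  also have "\<dots> \<longleftrightarrow> (\<forall>v'. (C_I Comp P v' \<and> f_implements Comp prov v' f) \<longrightarrow> v' ck)"
    using assms(3,6) by (rule QBF_iff_provides[symmetric])
  finally show ?thesis .
qed

end
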